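(* Let $\ell$ be the $x$-axis. Let $P$ be a set of $n$ points with nonnegative $y$-coordinates and pairwise distinct $x$-coordinates, sorted by $x$-coordinate as $p_1,\dots,p_n$. Let $S$ be a finite set of closed disks all of the same radius, with centers having nonpositive $y$-coordinates, each disk $s$ having weight $w(s)>0$, such that no point of $P$ lies on the boundary of any disk of $S$ and every point of $P$ lies in at least one disk of $S$. For a point $p$ let $S_p\subseteq S$ be the set of disks containing $p$. Define numbers $\delta_1,\dots,\delta_n$ by the following procedure: initially $\mathrm{cost}(s)=w(s)$ for all $s\in S$; then for $i=1,2,\dots,n$ in order, set $\delta_i=\min_{s\in S_{p_i}}\mathrm{cost}(s)$, and afterwards set $\mathrm{cost}(s)=w(s)+\delta_i$ for every disk $s\in S\setminus S_{p_i}$. Then for every $i\in\{1,\dots,n\}$, $\delta_i$ equals the minimum total weight of a subset of $S$ whose union covers $\{p_1,\dots,p_i\}$. In particular $\delta_n$ equals the minimum total weight of a subset of $S$ whose union covers $P$.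
   Context: Disks are closed; the value of $\mathrm{cost}(s)$ used when computing $\delta_i$ is its value at the start of iteration $i$ (i.e., after the updates of iterations $1,\dots,i-1$). *)

theory Defs
  imports Complex_Main
begin

type_synonym point = "real \<times> real"

text \<open>A disk is given by its center; all disks share the common radius r.
  Closed disk membership and boundary.\<close>
definition in_disk :: "real \<Rightarrow> point \<Rightarrow> point \<Rightarrow> bool" where
  "in_disk r c q \<longleftrightarrow> (fst q - fst c)^2 + (snd q - snd c)^2 \<le> r^2"

definition on_boundary :: "real \<Rightarrow> point \<Rightarrow> point \<Rightarrow> bool" where
  "on_boundary r c q \<longleftrightarrow> (fst q - fst c)^2 + (snd q - snd c)^2 = r^2"

definition disks_containing :: "real \<Rightarrow> point set \<Rightarrow> point \<Rightarrow> point set" where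
  "disks_containing r S q = {s \<in> S. in_disk r s q}"

fun cost_after :: "real \<Rightarrow> point set \<Rightarrow> (point \<Rightarrow> real) \<Rightarrow> (nat \<Rightarrow> point) \<Rightarrow> nat \<Rightarrow> point \<Rightarrow> real" where
  "cost_after r S w p 0 = w"
| "cost_after r S w p (Suc i) =
     (let d = Min (cost_after r S w p i ` disks_containing r S (p (Suc i)))
      in (\<lambda>s. if s \<in> disks_containing r S (p (Suc i)) then cost_after r S w p i s
              else w s + d))"

definition delta :: "real \<Rightarrow> point set \<Rightarrow> (point \<Rightarrow> real) \<Rightarrow> (nat \<Rightarrow> point) \<Rightarrow> nat \<Rightarrow> real" where
  "delta r S w p i = Min (cost_after r S w p (i - 1) ` disks_containing r S (p i))"

definition min_cover_weight :: "real \<Rightarrow> point set \<Rightarrow> (point \<Rightarrow> real) \<Rightarrow> point set \<Rightarrow> real" where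
  "min_cover_weight r S w Q =
     Min {sum w C | C. C \<subseteq> S \<and> (\<forall>q\<in>Q. \<exists>c\<in>C. in_disk r c q)}"

end

(* Write delta 0 = 0. After iteration i the cost of a disk s is w s + delta j, where j is the
   last index <= i with p j outside s (j = 0 if there is none). Hence delta i is the weight of
   {s} plus a cover of p 1 .. p j for a disk s containing p i, and by induction delta i is at
   least the optimum. Conversely, let C cover p 1 .. p i and pick s in C containing p i whose j
   is least. Equal disks centred below the x-axis cannot interleave on points above it: if s
   contains p k and p m but not p j (k < j < m), any disk containing p j but not p k contains
   p m. So a disk of C covering p j but not p k would have a smaller j than s, which shows that
   C - {s} still covers p 1 .. p j; by induction its weight is at least delta j, and the total
   w s + delta j is the cost of s, which is at least delta i. *)
theory Submission
  imports Defs
begin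

lemma in_disk_reflect: "in_disk r (- fst c, snd c) (- fst q, snd q) \<longleftrightarrow> in_disk r c q"
  by (simp add: in_disk_def power2_commute)

lemma in_disk_below_chord:
  assumes a: "in_disk r s a" and c: "in_disk r s c"
    and between: "fst a < fst b" "fst b < fst c"
    and above_centre: "snd s \<le> snd b"
    and below_chord: "(fst c - fst a) * snd b \<le> (fst c - fst b) * snd a + (fst b - fst a) * snd c"
  shows "in_disk r s b"
proof -
  define \<alpha> \<beta> where "\<alpha> = fst c - fst b" and "\<beta> = fst b - fst a"
  have pos: "\<alpha> > 0" "\<beta> > 0" using between by (auto simp: \<alpha>_def \<beta>_def)
  define A1 A3 B1 B3 where "A1 = fst a - fst s" and "A3 = fst c - fst s"
    and "B1 = snd a - snd s" and "B3 = snd c - snd s"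
  have x: "(\<alpha> + \<beta>) * (fst b - fst s) = \<alpha> * A1 + \<beta> * A3"
    by (simp add: \<alpha>_def \<beta>_def A1_def A3_def algebra_simps)
  have "(\<alpha> + \<beta>) * (snd b - snd s) \<le> \<alpha> * B1 + \<beta> * B3"
    using below_chord by (simp add: \<alpha>_def \<beta>_def B1_def B3_def algebra_simps)
  moreover have "0 \<le> (\<alpha> + \<beta>) * (snd b - snd s)" using pos above_centre by simp
  ultimately have y: "((\<alpha> + \<beta>) * (snd b - snd s))^2 \<le> (\<alpha> * B1 + \<beta> * B3)^2"
    by (rule power_mono)
  have "(\<alpha> + \<beta>)^2 * ((fst b - fst s)^2 + (snd b - snd s)^2)
      \<le> (\<alpha> * A1 + \<beta> * A3)^2 + (\<alpha> * B1 + \<beta> * B3)^2"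
    using x y by (simp add: power_mult_distrib[symmetric] algebra_simps)
  also have "\<dots> = (\<alpha> + \<beta>) * (\<alpha> * (A1^2 + B1^2) + \<beta> * (A3^2 + B3^2))
      - \<alpha> * \<beta> * ((A1 - A3)^2 + (B1 - B3)^2)"
    by (simp add: power2_eq_square algebra_simps)
  also have "\<dots> \<le> (\<alpha> + \<beta>) * (\<alpha> * (A1^2 + B1^2) + \<beta> * (A3^2 + B3^2))"
    using pos by simp
  also have "\<dots> \<le> (\<alpha> + \<beta>) * (\<alpha> * r^2 + \<beta> * r^2)"
    using pos a c
    by (intro mult_left_mono add_mono) (auto simp: in_disk_def A1_def A3_def B1_def B3_def)
  also have "\<dots> = (\<alpha> + \<beta>)^2 * r^2" by (simp add: power2_eq_square algebra_simps)
  finally show ?thesis using pos by (simp add: in_disk_def)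
qed

lemma higher_right_disk_no_swap:
  assumes order: "fst b < fst c" and heights: "snd t \<le> snd b" "snd t \<le> snd c"
    and higher: "snd s < snd t" and right: "fst s \<le> fst t"
    and s: "in_disk r s c" "\<not> in_disk r s b" and t: "in_disk r t b" "\<not> in_disk r t c"
  shows False
proof -
  have "(snd c - snd t)^2 < (snd c - snd s)^2"
    using heights higher by (intro power_strict_mono) auto
  then have "(fst c - fst s)^2 < (fst c - fst t)^2"
    using s(1) t(2) by (simp add: in_disk_def)
  then have "0 < (fst t - fst s) * (fst t + fst s - 2 * fst c)"
    by (simp add: power2_eq_square algebra_simps)
  with right have "fst s < fst t" "fst c < fst t"
    by (auto simp: zero_less_mult_iff)
  then have "(fst c - fst t)^2 < (fst b - fst t)^2"
    using order by (simp add: power2_commute[of _ "fst t"] power_strict_mono)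
  then have "(snd b - snd t)^2 < (snd c - snd t)^2"
    using t by (simp add: in_disk_def)
  then have "snd b < snd c"
    using heights by (auto dest: power_less_imp_less_base)
  have "((fst c - fst t)^2 + (snd c - snd t)^2 - ((fst c - fst s)^2 + (snd c - snd s)^2))
      - ((fst b - fst t)^2 + (snd b - snd t)^2 - ((fst b - fst s)^2 + (snd b - snd s)^2))
      = 2 * (fst s - fst t) * (fst c - fst b) + 2 * (snd s - snd t) * (snd c - snd b)"
    by (simp add: power2_eq_square algebra_simps)
  moreover have "(fst s - fst t) * (fst c - fst b) < 0" "(snd s - snd t) * (snd c - snd b) < 0"
    using \<open>fst s < fst t\<close> order higher \<open>snd b < snd c\<close> by (auto simp: mult_neg_pos)
  ultimately show False using s t unfolding in_disk_def by linarith
qed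

lemma lower_disks_not_interleaved:
  assumes order: "fst a < fst b" "fst b < fst c"
    and above: "0 \<le> snd a" "0 \<le> snd b" "0 \<le> snd c"
    and below: "snd s \<le> 0" "snd t \<le> 0"
    and s: "in_disk r s a" "in_disk r s c" "\<not> in_disk r s b"
    and t: "in_disk r t b" "\<not> in_disk r t a" "\<not> in_disk r t c"
  shows False
proof (cases "snd s < snd t")
  case higher: True
  show False
  proof (cases "fst s \<le> fst t")
    case True
    then show False
      using higher_right_disk_no_swap[of b c t s r]
        order(2) above(2,3) below(2) higher s(2,3) t(1,3) by linarith
  next
    case False
    \<comment> \<open>Mirror in the y-axis, which exchanges the roles of a and c.\<close>
    with order(1) above(1,2) below(2) higher s(1,3) t(1,2) show False
      using higher_right_disk_no_swap[of "(- fst b, snd b)" "(- fst a, snd a)"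
          "(- fst t, snd t)" "(- fst s, snd s)" r]
      by (simp add: in_disk_reflect)
  qed
next
  case not_higher: False
  show False
  proof (cases "(fst c - fst a) * snd b \<le> (fst c - fst b) * snd a + (fst b - fst a) * snd c")
    case True
    then have "in_disk r s b"
      using in_disk_below_chord[OF s(1,2) order] above below by linarith
    with s(3) show False ..
  next
    case above_chord: False
    \<comment> \<open>The power difference f is affine, so f b is the convex combination of f a and f c
      up to a term of the sign of (snd s - snd t) times the height of b above the chord ac.\<close>
    define f where
      "f q = (fst q - fst t)^2 + (snd q - snd t)^2 - ((fst q - fst s)^2 + (snd q - snd s)^2)"
      for q :: point
    have "0 < f a" "0 < f c" "f b < 0"
      using s t by (auto simp: f_def in_disk_def)
    define h where "h = (fst c - fst a) * snd b - (fst c - fst b) * snd a - (fst b - fst a) * snd c"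
    moreover have "(fst c - fst a) * f b
        = (fst c - fst b) * f a + (fst b - fst a) * f c + 2 * (snd s - snd t) * h"
      by (simp add: f_def h_def power2_eq_square algebra_simps)
    moreover have "0 \<le> (snd s - snd t) * h"
      using not_higher above_chord by (simp add: h_def)
    moreover have "(fst c - fst a) * f b < 0" "0 < (fst c - fst b) * f a" "0 < (fst b - fst a) * f c"
      using order \<open>0 < f a\<close> \<open>0 < f c\<close> \<open>f b < 0\<close> by (simp_all add: mult_pos_neg)
    ultimately show False by linarith
  qed
qed

lemma in_disk_beyond_gap:
  assumes "fst a < fst b" "fst b < fst c"
    and "0 \<le> snd a" "0 \<le> snd b" "0 \<le> snd c" "snd s \<le> 0" "snd t \<le> 0"
    and "in_disk r s a" "in_disk r s c" "\<not> in_disk r s b"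
    and "in_disk r t b" "\<not> in_disk r t a"
  shows "in_disk r t c"
  using lower_disks_not_interleaved[of a b c s t r] assms by blast

fun last_outside :: "real \<Rightarrow> point \<Rightarrow> (nat \<Rightarrow> point) \<Rightarrow> nat \<Rightarrow> nat" where
  "last_outside r s p 0 = 0"
| "last_outside r s p (Suc i) = (if in_disk r s (p (Suc i)) then last_outside r s p i else Suc i)"

lemma last_outside_le: "last_outside r s p i \<le> i"
  by (induction i) auto

lemma in_disk_after_last_outside:
  "last_outside r s p i < k \<Longrightarrow> k \<le> i \<Longrightarrow> in_disk r s (p k)"
  by (induction i) (auto simp: le_Suc_eq split: if_splits)

lemma not_in_disk_last_outside:
  "last_outside r s p i \<noteq> 0 \<Longrightarrow> \<not> in_disk r s (p (last_outside r s p i))"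
  by (induction i) auto

lemma last_outside_less:
  assumes "0 < j" and "\<forall>m\<in>{j..i}. in_disk r s (p m)"
  shows "last_outside r s p i < j"
  using assms last_outside_le[of r s p i] not_in_disk_last_outside[of r s p i]
  by (metis atLeastAtMost_iff not_less not_gr0 order.strict_trans1)

(* delta r S w p 0 is junk (it refers to p 0); the value 0 is the cost offset of a disk that
   has contained every point so far. *)
definition delta0 ::
    "real \<Rightarrow> point set \<Rightarrow> (point \<Rightarrow> real) \<Rightarrow> (nat \<Rightarrow> point) \<Rightarrow> nat \<Rightarrow> real" where
  "delta0 r S w p j = (if j = 0 then 0 else delta r S w p j)"

lemma cost_after_eq_last_outside:
  assumes "s \<in> S"
  shows "cost_after r S w p i s = w s + delta0 r S w p (last_outside r s p i)"
proof (induction i)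
  case 0
  then show ?case by (simp add: delta0_def)
next
  case (Suc i)
  then show ?case
    using assms by (simp add: Let_def disks_containing_def delta0_def delta_def)
qed

definition covers :: "real \<Rightarrow> point set \<Rightarrow> point set \<Rightarrow> bool" where
  "covers r C Q \<longleftrightarrow> (\<forall>q\<in>Q. \<exists>c\<in>C. in_disk r c q)"

lemma covers_image: "covers r C (p ` A) \<longleftrightarrow> (\<forall>k\<in>A. \<exists>c\<in>C. in_disk r c (p k))"
  by (simp add: covers_def)

lemma min_cover_weight_eqI:
  assumes "finite S" and "C \<subseteq> S" "covers r C Q" "sum w C \<le> x"
    and lower: "\<And>C'. C' \<subseteq> S \<Longrightarrow> covers r C' Q \<Longrightarrow> x \<le> sum w C'"
  shows "min_cover_weight r S w Q = x"
proof -
  have weights: "{sum w C | C. C \<subseteq> S \<and> (\<forall>q\<in>Q. \<exists>c\<in>C. in_disk r c q)}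
      = sum w ` {C. C \<subseteq> S \<and> covers r C Q}"
    by (auto simp: covers_def)
  have "x = sum w C" using assms by (simp add: order.antisym)
  then show ?thesis
    unfolding min_cover_weight_def weights using assms
    by (intro Min_eqI) (auto intro: finite_subset[of _ "Pow S"])
qed

lemma exists_cover_weight_le_delta0:
  assumes "finite S" and nonneg: "\<forall>s\<in>S. 0 \<le> w s"
    and covered: "\<forall>k\<in>{1..n}. \<exists>s\<in>S. in_disk r s (p k)"
    and "i \<le> n"
  shows "\<exists>C\<subseteq>S. covers r C (p ` {1..i}) \<and> sum w C \<le> delta0 r S w p i"
  using \<open>i \<le> n\<close>
proof (induction i rule: less_induct)
  case (less i)
  show ?case
  proof (cases i)
    case 0
    then show ?thesis by (auto simp: covers_def delta0_def)
  next
    case (Suc m)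
    let ?Sp = "disks_containing r S (p i)"
    have "?Sp \<noteq> {}"
      using covered less.prems Suc unfolding disks_containing_def by fastforce
    moreover have "finite ?Sp"
      using \<open>finite S\<close> by (simp add: disks_containing_def)
    ultimately have "delta r S w p i \<in> cost_after r S w p m ` ?Sp"
      unfolding delta_def Suc by simp
    then obtain s where s: "s \<in> ?Sp" and s_min: "cost_after r S w p m s = delta r S w p i"
      by (metis imageE)
    then have "s \<in> S" "in_disk r s (p i)" by (auto simp: disks_containing_def)
    define j where "j = last_outside r s p i"
    have j_eq: "j = last_outside r s p m"
      using \<open>in_disk r s (p i)\<close> by (simp add: j_def Suc)
    then have "j < i" using last_outside_le[of r s p m] Suc by simp
    with less obtain C where C: "C \<subseteq> S" "covers r C (p ` {1..j})" "sum w C \<le> delta0 r S w p j"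
      by auto
    have "covers r (insert s C) (p ` {1..i})"
      unfolding covers_image
    proof
      fix k assume "k \<in> {1..i}"
      then consider "k \<in> {1..j}" | "j < k" "k \<le> i" by fastforce
      then show "\<exists>c\<in>insert s C. in_disk r c (p k)"
        using C(2) in_disk_after_last_outside[of r s p i k, folded j_def]
        unfolding covers_image by cases auto
    qed
    moreover have "sum w (insert s C) \<le> w s + sum w C"
      using C(1) \<open>s \<in> S\<close> nonneg \<open>finite S\<close> by (auto simp: sum.insert_if finite_subset)
    moreover have "w s + delta0 r S w p j = delta0 r S w p i"
      using cost_after_eq_last_outside[OF \<open>s \<in> S\<close>, where i = m] s_min j_eq by (simp add: Suc delta0_def)
    ultimately show ?thesis
      using C \<open>s \<in> S\<close> by (intro exI[of _ "insert s C"]) auto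
  qed
qed

lemma covers_without_least_outside:
  assumes above: "\<forall>k\<in>{1..i}. 0 \<le> snd (p k)"
    and sorted: "\<forall>k\<in>{1..i}. \<forall>m\<in>{1..i}. k < m \<longrightarrow> fst (p k) < fst (p m)"
    and below: "\<forall>c\<in>C. snd c \<le> 0"
    and cover: "covers r C (p ` {1..i})"
    and s: "s \<in> C" "in_disk r s (p i)"
    and least: "\<forall>t\<in>C. in_disk r t (p i) \<longrightarrow> last_outside r s p i \<le> last_outside r t p i"
  shows "covers r (C - {s}) (p ` {1..last_outside r s p i})"
proof -
  define j where "j = last_outside r s p i"
  have "j \<le> i" using last_outside_le by (simp add: j_def)
  have "\<exists>c\<in>C - {s}. in_disk r c (p k)" if k: "k \<in> {1..j}" for k
  proof (rule ccontr)
    assume none: "\<not> (\<exists>c\<in>C - {s}. in_disk r c (p k))"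
    have "k \<in> {1..i}" using k \<open>j \<le> i\<close> by simp
    with cover none have s_k: "in_disk r s (p k)"
      unfolding covers_image by blast
    have "0 < j" using k by simp
    then have s_j: "\<not> in_disk r s (p j)" using not_in_disk_last_outside by (simp add: j_def)
    with s_k k have "k < j" by (cases "k = j") auto
    have "j \<in> {1..i}" using \<open>0 < j\<close> \<open>j \<le> i\<close> by simp
    with cover obtain t where t: "t \<in> C" "in_disk r t (p j)"
      unfolding covers_image by blast
    with s_j none have t_k: "\<not> in_disk r t (p k)" by auto
    have t_after: "in_disk r t (p m)" if "m \<in> {j..i}" for m
    proof (cases "m = j")
      case False
      with that have "j < m" "m \<le> i" by auto
      then show ?thesis
        using in_disk_beyond_gap[of "p k" "p j" "p m" s t r] \<open>k < j\<close> k \<open>0 < j\<close>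
          above sorted below s(1) t s_k s_j t_k in_disk_after_last_outside[of r s p i m]
        by (simp add: j_def)
    qed (use t in simp)
    then have "last_outside r t p i < j" using \<open>0 < j\<close> by (intro last_outside_less) auto
    moreover have "j \<le> last_outside r t p i"
      using least t(1) t_after[of i] \<open>j \<le> i\<close> by (simp add: j_def)
    ultimately show False by simp
  qed
  then show ?thesis by (simp add: covers_image j_def)
qed

lemma delta0_le_cover_weight:
  assumes above: "\<forall>k\<in>{1..n}. 0 \<le> snd (p k)"
    and sorted: "\<forall>k\<in>{1..n}. \<forall>m\<in>{1..n}. k < m \<longrightarrow> fst (p k) < fst (p m)"
    and below: "\<forall>s\<in>S. snd s \<le> 0"
    and "finite S" and nonneg: "\<forall>s\<in>S. 0 \<le> w s"
    and "i \<le> n" "C \<subseteq> S" "covers r C (p ` {1..i})"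
  shows "delta0 r S w p i \<le> sum w C"
  using assms(6-8)
proof (induction i arbitrary: C rule: less_induct)
  case (less i)
  have "finite C" using less.prems(2) \<open>finite S\<close> by (rule finite_subset)
  show ?case
  proof (cases i)
    case 0
    then show ?thesis using less.prems(2) nonneg by (auto simp: delta0_def intro: sum_nonneg)
  next
    case (Suc m)
    have "i \<in> {1..i}" using Suc by simp
    with less.prems(3) obtain c where "c \<in> C" "in_disk r c (p i)"
      unfolding covers_image by blast
    then obtain s where s: "s \<in> C" "in_disk r s (p i)"
      and least: "\<forall>t\<in>C. in_disk r t (p i) \<longrightarrow> last_outside r s p i \<le> last_outside r t p i"
      using ex_has_least_nat[of "\<lambda>s. s \<in> C \<and> in_disk r s (p i)" c "\<lambda>s. last_outside r s p i"]
      by blast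
    define j where "j = last_outside r s p i"
    have j_eq: "j = last_outside r s p m" using s(2) by (simp add: j_def Suc)
    have "covers r (C - {s}) (p ` {1..j})"
      unfolding j_def using above sorted below less.prems s least
      by (intro covers_without_least_outside) auto
    then have "delta0 r S w p j \<le> sum w (C - {s})"
      using less.IH[of j "C - {s}"] less.prems last_outside_le[of r s p m] j_eq Suc by auto
    moreover have "delta r S w p i \<le> cost_after r S w p m s"
      unfolding delta_def Suc using s less.prems(2) \<open>finite S\<close>
      by (intro Min_le) (auto simp: disks_containing_def Suc)
    moreover have "cost_after r S w p m s = w s + delta0 r S w p j"
      using cost_after_eq_last_outside[of s S r w p m] s(1) less.prems(2) j_eq by auto
    moreover have "sum w C = w s + sum w (C - {s})"
      using \<open>finite C\<close> s(1) by (simp add: sum.remove)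
    ultimately show ?thesis by (simp add: delta0_def Suc)
  qed
qed

theorem mainTheorem2:
  fixes r :: real and S :: "point set" and w :: "point \<Rightarrow> real"
    and p :: "nat \<Rightarrow> point" and n :: nat
  assumes r_pos: "r > 0"
    and P_above: "\<forall>i\<in>{1..n}. snd (p i) \<ge> 0"
    and P_sorted: "\<forall>i\<in>{1..n}. \<forall>j\<in>{1..n}. i < j \<longrightarrow> fst (p i) < fst (p j)"
    and S_fin: "finite S"
    and S_below: "\<forall>s\<in>S. snd s \<le> 0"
    and w_pos: "\<forall>s\<in>S. w s > 0"
    and no_bdry: "\<forall>i\<in>{1..n}. \<forall>s\<in>S. \<not> on_boundary r s (p i)"
    and covered: "\<forall>i\<in>{1..n}. \<exists>s\<in>S. in_disk r s (p i)"
  shows "(\<forall>i\<in>{1..n}. delta r S w p i = min_cover_weight r S w (p ` {1..i}))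
         \<and> (n \<ge> 1 \<longrightarrow> delta r S w p n = min_cover_weight r S w (p ` {1..n}))"
proof -
  have nonneg: "\<forall>s\<in>S. 0 \<le> w s" using w_pos by (simp add: less_imp_le)
  have "delta r S w p i = min_cover_weight r S w (p ` {1..i})" if "i \<in> {1..n}" for i
  proof -
    from that have "i \<le> n" by simp
    obtain C where "C \<subseteq> S" "covers r C (p ` {1..i})" "sum w C \<le> delta0 r S w p i"
      using exists_cover_weight_le_delta0[OF S_fin nonneg covered \<open>i \<le> n\<close>] by blast
    then have "min_cover_weight r S w (p ` {1..i}) = delta0 r S w p i"
      using delta0_le_cover_weight[OF P_above P_sorted S_below S_fin nonneg \<open>i \<le> n\<close>]
      by (intro min_cover_weight_eqI[OF S_fin])
    with that show ?thesis by (simp add: delta0_def)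
  qed
  then show ?thesis by simp
qed

end
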